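(* Fix a constant $r$. There is a constant $c_r$ such that for every unweighted $K_r$-minor-free graph $G$ and every BFS forest $F\subseteq G$, there is a root expansion of $F$ of size at most $c_r$.
   Context: $G$ is unweighted (edge lengths 1); $K_r$-minor-free means $G$ has no $K_r$ minor. For $S\subseteq V(G)$, $G[S]$ is the induced subgraph. A tree $T\subseteq G$ rooted at $r$ is a BFS tree if $\mathrm{dist}_T(r,v)=\mathrm{dist}_{G[V(T)]}(r,v)$ for all $v\in V(T)$. A BFS forest is a subgraph of $G$ that is a disjoint union of vertex-disjoint BFS trees. A BFS tree $T$ with root $r$ preserves a path $\pi$ in $G$ if every vertex of $\pi$ is in $V(T)$ and $\pi$ passes through $r$; a set of BFS trees (or forests) preserves $\pi$ if one of its trees preserves $\pi$. The prefix of a path $\pi$ is the path consisting of all but the last edge of $\pi$. A root expansion of a BFS tree $T$ is a set $\mathcal{T}$ of BFS trees such that every path $\pi$ in $G$ whose prefix is preserved by $T$ is preserved by $\mathcal{T}$. A root expansion of a BFS forest $F$ is a set $\mathcal{F}$ of BFS forests (each consisting of vertex-disjoint BFS trees; trees in different forests may share vertices) such that the set of all trees appearing in forests of $\mathcal{F}$ is a root expansion of each tree of $F$. The size of the root expansion is $|\mathcal{F}|$. *)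

theory Defs
  imports Main
begin

type_synonym 'a graph = "'a set \<times> ('a \<times> 'a) set"

definition is_graph :: "'a graph \<Rightarrow> bool" where
  "is_graph G \<longleftrightarrow> finite (fst G) \<and> snd G \<subseteq> fst G \<times> fst G \<and> sym (snd G)
     \<and> (\<forall>x. (x, x) \<notin> snd G)"

definition subgraph :: "'a graph \<Rightarrow> 'a graph \<Rightarrow> bool" where
  "subgraph H G \<longleftrightarrow> fst H \<subseteq> fst G \<and> snd H \<subseteq> snd G"

definition induced :: "'a graph \<Rightarrow> 'a set \<Rightarrow> 'a graph" where
  "induced G S = (S, snd G \<inter> (S \<times> S))"

definition walk :: "'a graph \<Rightarrow> 'a list \<Rightarrow> bool" where
  "walk G xs \<longleftrightarrow> xs \<noteq> [] \<and> set xs \<subseteq> fst G \<and> successively (\<lambda>x y. (x, y) \<in> snd G) xs"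

definition gpath :: "'a graph \<Rightarrow> 'a list \<Rightarrow> bool" where
  "gpath G xs \<longleftrightarrow> walk G xs \<and> distinct xs"

definition dist :: "'a graph \<Rightarrow> 'a \<Rightarrow> 'a \<Rightarrow> nat" where
  "dist G u v = (LEAST n. \<exists>xs. walk G xs \<and> hd xs = u \<and> last xs = v \<and> length xs = Suc n)"

definition connected_graph :: "'a graph \<Rightarrow> bool" where
  "connected_graph G \<longleftrightarrow> (\<forall>u\<in>fst G. \<forall>v\<in>fst G. \<exists>xs. walk G xs \<and> hd xs = u \<and> last xs = v)"

definition has_cycle :: "'a graph \<Rightarrow> bool" where
  "has_cycle G \<longleftrightarrow> (\<exists>xs. gpath G xs \<and> length xs \<ge> 3 \<and> (last xs, hd xs) \<in> snd G)"

definition is_tree :: "'a graph \<Rightarrow> bool" where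
  "is_tree T \<longleftrightarrow> is_graph T \<and> fst T \<noteq> {} \<and> connected_graph T \<and> \<not> has_cycle T"

definition bfs_tree :: "'a graph \<Rightarrow> 'a \<times> 'a graph \<Rightarrow> bool" where
  "bfs_tree G RT \<longleftrightarrow> (case RT of (r, T) \<Rightarrow>
     subgraph T G \<and> is_tree T \<and> r \<in> fst T \<and>
     (\<forall>v\<in>fst T. dist T r v = dist (induced G (fst T)) r v))"

definition bfs_forest :: "'a graph \<Rightarrow> ('a \<times> 'a graph) set \<Rightarrow> bool" where
  "bfs_forest G F \<longleftrightarrow> (\<forall>T\<in>F. bfs_tree G T) \<and>
     (\<forall>T1\<in>F. \<forall>T2\<in>F. T1 \<noteq> T2 \<longrightarrow> fst (snd T1) \<inter> fst (snd T2) = {})"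

definition preserves :: "'a \<times> 'a graph \<Rightarrow> 'a list \<Rightarrow> bool" where
  "preserves RT p \<longleftrightarrow> set p \<subseteq> fst (snd RT) \<and> fst RT \<in> set p"

text \<open>The prefix of a path (vertex list) drops its last edge, i.e. its last vertex.\<close>

definition root_expansion_tree ::
    "'a graph \<Rightarrow> 'a \<times> 'a graph \<Rightarrow> ('a \<times> 'a graph) set \<Rightarrow> bool" where
  "root_expansion_tree G T TS \<longleftrightarrow> (\<forall>T'\<in>TS. bfs_tree G T') \<and>
     (\<forall>p. gpath G p \<and> preserves T (butlast p) \<longrightarrow> (\<exists>T'\<in>TS. preserves T' p))"

definition root_expansion_forest ::
    "'a graph \<Rightarrow> ('a \<times> 'a graph) set \<Rightarrow> ('a \<times> 'a graph) set set \<Rightarrow> bool" where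
  "root_expansion_forest G F FS \<longleftrightarrow> (\<forall>F'\<in>FS. bfs_forest G F') \<and>
     (\<forall>T\<in>F. root_expansion_tree G T (\<Union>FS))"

definition has_K_minor :: "nat \<Rightarrow> 'a graph \<Rightarrow> bool" where
  "has_K_minor r G \<longleftrightarrow> (\<exists>B :: nat \<Rightarrow> 'a set.
     (\<forall>i<r. B i \<noteq> {} \<and> B i \<subseteq> fst G \<and> connected_graph (induced G (B i))) \<and>
     (\<forall>i<r. \<forall>j<r. i \<noteq> j \<longrightarrow> B i \<inter> B j = {}) \<and>
     (\<forall>i<r. \<forall>j<r. i \<noteq> j \<longrightarrow> (\<exists>x\<in>B i. \<exists>y\<in>B j. (x, y) \<in> snd G)))"

end

theory Submission
  imports Defs
begin

text \<open>Contracting the trees of F gives a minor of G, hence a \<open>K\<^sub>r\<close>-minor-free graph, and such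
graphs are \<open>d\<close>-degenerate for \<open>d = 2\<cdot>4\<^sup>r\<close> (Mader's contraction argument), so the trees can be
properly coloured with \<open>d\<close> colours. A path whose prefix is preserved by a tree \<open>T\<close> of F leaves
\<open>T\<close> at most in its last vertex \<open>x\<close>, and then \<open>x\<close> avoids all trees of the colour \<open>c\<close> of \<open>T\<close>.
The bipartite minor between the trees of colour \<open>c\<close> and the vertices outside them is
\<open>d\<close>-degenerate as well, so it has an orientation with out-degrees below \<open>d\<close>; number the
out-neighbours of each node by labels \<open>t < d\<close>. Gluing every node to the nodes pointing to it with
label \<open>t\<close> gives disjoint connected sets, since labels are injective at each tail. Their BFS trees
form \<open>2d\<^sup>2\<close> forests, one of which contains \<open>T\<close> and \<open>x\<close> in a tree rooted at \<open>x\<close> or at the root of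
\<open>T\<close>; together with F they preserve every such path.\<close>

subsection \<open>Walks and connectivity\<close>

definition reachable :: "'a graph \<Rightarrow> 'a \<Rightarrow> 'a \<Rightarrow> bool" where
  "reachable H u v \<longleftrightarrow> (\<exists>xs. walk H xs \<and> hd xs = u \<and> last xs = v)"

definition connected_on :: "'a graph \<Rightarrow> 'a set \<Rightarrow> bool" where
  "connected_on G A \<longleftrightarrow> connected_graph (induced G A)"

lemma walk_singleton [simp]: "walk H [v] \<longleftrightarrow> v \<in> fst H"
  by (simp add: walk_def)

lemma walk_nonempty: "walk H xs \<Longrightarrow> xs \<noteq> []"
  by (simp add: walk_def)

lemma walk_append:
  assumes "walk H xs" "walk H ys" "last xs = hd ys"
  shows "walk H (xs @ tl ys)"
proof -
  obtain y ys' where ys: "ys = y # ys'"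
    using walk_nonempty[OF assms(2)] by (cases ys) auto
  have "successively (\<lambda>x y. (x, y) \<in> snd H) (xs @ ys')"
  proof (cases ys')
    case (Cons z zs)
    then have "(y, z) \<in> snd H" "successively (\<lambda>x y. (x, y) \<in> snd H) ys'"
      using assms(2) ys by (auto simp: walk_def)
    then show ?thesis
      using assms ys Cons unfolding walk_def by (auto simp: successively_append_iff)
  qed (use assms in \<open>simp add: walk_def\<close>)
  then show ?thesis
    using assms ys unfolding walk_def by auto
qed

lemma last_append_tl:
  "xs \<noteq> [] \<Longrightarrow> ys \<noteq> [] \<Longrightarrow> last xs = hd ys \<Longrightarrow> last (xs @ tl ys) = last ys"
  by (cases ys) auto

lemma walk_rev:
  assumes "sym (snd H)" "walk H xs"
  shows "walk H (rev xs)"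
proof -
  have "successively (\<lambda>x y. (y, x) \<in> snd H) xs"
    using assms(2) unfolding walk_def by (auto elim!: successively_mono intro: symD[OF assms(1)])
  then show ?thesis using assms(2) unfolding walk_def successively_rev by simp
qed

lemma walk_mono:
  assumes "walk H xs" "set xs \<subseteq> fst H'" "snd H \<subseteq> snd H'"
  shows "walk H' xs"
  using assms unfolding walk_def by (auto elim!: successively_mono)

lemma walk_snoc_edge:
  assumes "walk H (xs @ [v])" "xs \<noteq> []"
  shows "walk H xs" "(last xs, v) \<in> snd H"
  using assms unfolding walk_def by (auto simp: successively_append_iff)

lemma reachable_refl: "v \<in> fst H \<Longrightarrow> reachable H v v"
  unfolding reachable_def by (rule exI[of _ "[v]"]) simp

lemma reachable_trans:
  assumes "reachable H u v" "reachable H v w"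
  shows "reachable H u w"
proof -
  obtain xs ys where "walk H xs" "hd xs = u" "last xs = v" "walk H ys" "hd ys = v" "last ys = w"
    using assms unfolding reachable_def by blast
  then show ?thesis
    unfolding reachable_def
    by (intro exI[of _ "xs @ tl ys"]) (simp add: walk_append last_append_tl walk_nonempty)
qed

lemma reachable_sym: "sym (snd H) \<Longrightarrow> reachable H u v \<Longrightarrow> reachable H v u"
  unfolding reachable_def using walk_rev walk_nonempty by (fastforce simp: hd_rev last_rev)

lemma reachable_edge: "(u, v) \<in> snd H \<Longrightarrow> u \<in> fst H \<Longrightarrow> v \<in> fst H \<Longrightarrow> reachable H u v"
  unfolding reachable_def by (rule exI[of _ "[u, v]"]) (simp add: walk_def)

lemma reachable_mono:
  assumes "reachable H u v" "fst H \<subseteq> fst H'" "snd H \<subseteq> snd H'"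
  shows "reachable H' u v"
proof -
  obtain xs where xs: "walk H xs" "hd xs = u" "last xs = v"
    using assms(1) unfolding reachable_def by blast
  have "set xs \<subseteq> fst H'" using xs(1) assms(2) unfolding walk_def by blast
  then show ?thesis using walk_mono[OF xs(1) _ assms(3)] xs unfolding reachable_def by blast
qed

lemma connected_graph_iff_reachable:
  "connected_graph H \<longleftrightarrow> (\<forall>u\<in>fst H. \<forall>v\<in>fst H. reachable H u v)"
  unfolding connected_graph_def reachable_def by simp

lemma induced_simps [simp]:
  "fst (induced G S) = S" "snd (induced G S) = snd G \<inter> S \<times> S"
  by (auto simp: induced_def)

lemma sym_induced: "sym (snd G) \<Longrightarrow> sym (snd (induced G S))"
  unfolding sym_def by simp

lemma reachable_induced_mono:
  "reachable (induced G A) u v \<Longrightarrow> A \<subseteq> B \<Longrightarrow> reachable (induced G B) u v"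
  by (erule reachable_mono) auto

lemma connected_on_iff:
  "connected_on G A \<longleftrightarrow> (\<forall>u\<in>A. \<forall>v\<in>A. reachable (induced G A) u v)"
  unfolding connected_on_def connected_graph_iff_reachable by simp

lemma connected_on_singleton: "connected_on G {x}"
  unfolding connected_on_iff by (auto intro: reachable_refl)

lemma connected_on_Un_attached:
  assumes symG: "sym (snd G)" and C: "connected_on G C" "c \<in> C"
    and K: "\<And>P. P \<in> K \<Longrightarrow> connected_on G P \<and> (\<exists>a\<in>C. \<exists>b\<in>P. (a, b) \<in> snd G)"
  shows "connected_on G (C \<union> \<Union>K)"
proof -
  let ?X = "C \<union> \<Union>K"
  have C_reach: "reachable (induced G ?X) u c" if "u \<in> C" for u
    using C that unfolding connected_on_iff by (meson Un_upper1 reachable_induced_mono)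
  have to_c: "reachable (induced G ?X) u c" if u: "u \<in> ?X" for u
  proof (cases "u \<in> C")
    case False
    then obtain P where P: "P \<in> K" "u \<in> P" using u by blast
    obtain a b where ab: "a \<in> C" "b \<in> P" "(a, b) \<in> snd G" using K[OF P(1)] by blast
    have "reachable (induced G ?X) u b"
      using K[OF P(1)] P ab unfolding connected_on_iff by (meson Union_upper le_supI2 reachable_induced_mono)
    moreover have "reachable (induced G ?X) b a"
      using ab P symG by (intro reachable_edge) (auto dest: symD)
    ultimately show ?thesis using C_reach[OF ab(1)] reachable_trans by metis
  qed (rule C_reach)
  show ?thesis
    unfolding connected_on_iff
  proof (intro ballI)
    fix u v assume "u \<in> ?X" "v \<in> ?X"
    then have "reachable (induced G ?X) u c" "reachable (induced G ?X) c v"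
      using to_c reachable_sym[OF sym_induced[OF symG]] by auto
    then show "reachable (induced G ?X) u v" by (rule reachable_trans)
  qed
qed

subsection \<open>Breadth-first search trees\<close>

lemma dist_le_walk:
  assumes "walk H xs" "hd xs = u" "last xs = v"
  shows "dist H u v \<le> length xs - 1"
  unfolding dist_def using assms walk_nonempty[OF assms(1)]
  by (intro Least_le) (metis Suc_pred' length_greater_0_conv)

lemma shortest_walk_exists:
  assumes "reachable H u v"
  shows "\<exists>xs. walk H xs \<and> hd xs = u \<and> last xs = v \<and> length xs = Suc (dist H u v)"
proof -
  obtain xs where xs: "walk H xs" "hd xs = u" "last xs = v"
    using assms unfolding reachable_def by blast
  then have "length xs = Suc (length xs - 1)" using walk_nonempty by fastforce
  then have "\<exists>n xs. walk H xs \<and> hd xs = u \<and> last xs = v \<and> length xs = Suc n" using xs by blast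
  then show ?thesis unfolding dist_def by (rule LeastI_ex)
qed

locale bfs_construction =
  fixes G :: "'a graph" and S :: "'a set" and \<rho> :: 'a
  assumes graph: "is_graph G" and S_vertices: "S \<subseteq> fst G"
    and S_connected: "connected_on G S" and root_in: "\<rho> \<in> S"
begin

abbreviation "H \<equiv> induced G S"

definition depth :: "'a \<Rightarrow> nat" where
  "depth v = dist H \<rho> v"

lemma sym_G: "sym (snd G)"
  using graph by (simp add: is_graph_def)

lemma depth_root: "depth \<rho> = 0"
  using dist_le_walk[of H "[\<rho>]"] root_in unfolding depth_def by simp

lemma reachable_from_root: "v \<in> S \<Longrightarrow> reachable H \<rho> v"
  using S_connected root_in unfolding connected_on_iff by blast

lemma depth_edge:
  assumes "(u, v) \<in> snd H" "u \<in> S"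
  shows "depth v \<le> Suc (depth u)"
proof -
  obtain xs where xs: "walk H xs" "hd xs = \<rho>" "last xs = u" "length xs = Suc (depth u)"
    using shortest_walk_exists[OF reachable_from_root[OF assms(2)]] unfolding depth_def by blast
  have "walk H [u, v]" using assms by (auto simp: walk_def)
  then have "walk H (xs @ [v])" using walk_append[OF xs(1)] xs(3) by fastforce
  then have "dist H \<rho> v \<le> length (xs @ [v]) - 1"
    using xs walk_nonempty[OF xs(1)] by (intro dist_le_walk) auto
  then show ?thesis using xs(4) by (simp add: depth_def)
qed

lemma parent_exists:
  assumes "v \<in> S" "v \<noteq> \<rho>"
  shows "\<exists>u. (u, v) \<in> snd H \<and> Suc (depth u) = depth v"
proof -
  obtain xs where xs: "walk H xs" "hd xs = \<rho>" "last xs = v" "length xs = Suc (depth v)"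
    using shortest_walk_exists[OF reachable_from_root[OF assms(1)]] unfolding depth_def by blast
  have "xs \<noteq> [v]" using xs(2) assms(2) by auto
  have xs_eq: "xs = butlast xs @ [v]"
    using append_butlast_last_id[OF walk_nonempty[OF xs(1)]] xs(3) by simp
  then have ne: "butlast xs \<noteq> []" using \<open>xs \<noteq> [v]\<close> by auto
  define u where "u = last (butlast xs)"
  have u: "walk H (butlast xs)" "(u, v) \<in> snd H"
    using walk_snoc_edge[of H "butlast xs" v] xs(1) xs_eq ne unfolding u_def by auto
  have "hd (butlast xs) = \<rho>" using xs(2) xs_eq ne by (metis hd_append2)
  then have "depth u \<le> length (butlast xs) - 1"
    using dist_le_walk[OF u(1) _ u_def[symmetric]] unfolding depth_def by blast
  moreover have "length (butlast xs) = depth v" using xs(4) by simp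
  moreover have "length (butlast xs) > 0" using ne length_greater_0_conv by blast
  ultimately have "Suc (depth u) \<le> depth v" by linarith
  moreover have "depth v \<le> Suc (depth u)" using u(2) by (intro depth_edge) auto
  ultimately show ?thesis using u(2) by (intro exI[of _ u]) simp
qed

definition parent :: "'a \<Rightarrow> 'a" where
  "parent v = (SOME u. (u, v) \<in> snd H \<and> Suc (depth u) = depth v)"

lemma parent:
  assumes "v \<in> S" "v \<noteq> \<rho>"
  shows "(parent v, v) \<in> snd G" "parent v \<in> S" "Suc (depth (parent v)) = depth v"
  using someI_ex[OF parent_exists[OF assms]] unfolding parent_def[symmetric] by auto

definition tree_edges :: "('a \<times> 'a) set" where
  "tree_edges = (\<lambda>v. (parent v, v)) ` (S - {\<rho>}) \<union> (\<lambda>v. (v, parent v)) ` (S - {\<rho>})"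

definition tree :: "'a graph" where
  "tree = (S, tree_edges)"

lemma tree_edges_iff:
  "(a, b) \<in> tree_edges \<longleftrightarrow>
     (\<exists>v\<in>S. v \<noteq> \<rho> \<and> ((a, b) = (parent v, v) \<or> (a, b) = (v, parent v)))"
  unfolding tree_edges_def by auto

lemma tree_edges_subset: "tree_edges \<subseteq> snd H"
  using parent sym_G unfolding tree_edges_def by (auto dest: symD)

lemma sym_tree_edges: "sym tree_edges"
  unfolding sym_def tree_edges_iff by blast

lemma tree_edge_to_parent:
  assumes "(v, w) \<in> tree_edges" "depth w \<le> depth v"
  shows "v \<in> S" "v \<noteq> \<rho>" "w = parent v"
proof -
  obtain x where x: "x \<in> S" "x \<noteq> \<rho>" "(v, w) = (parent x, x) \<or> (v, w) = (x, parent x)"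
    using assms(1) tree_edges_iff by blast
  moreover have "(v, w) \<noteq> (parent x, x)"
    using parent(3)[OF x(1,2)] assms(2) by auto
  ultimately show "v \<in> S" "v \<noteq> \<rho>" "w = parent v" by auto
qed

lemma tree_walk_to:
  "v \<in> S \<Longrightarrow> \<exists>xs. walk tree xs \<and> hd xs = \<rho> \<and> last xs = v \<and> length xs = Suc (depth v)"
proof (induction "depth v" arbitrary: v)
  case 0
  then have "v = \<rho>" using parent(3) by fastforce
  then show ?case using 0 root_in by (intro exI[of _ "[\<rho>]"]) (simp add: tree_def)
next
  case (Suc n)
  have "v \<noteq> \<rho>" using Suc(2) depth_root by auto
  note p = parent[OF Suc(3) this]
  obtain xs where xs: "walk tree xs" "hd xs = \<rho>" "last xs = parent v" "length xs = Suc (depth (parent v))"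
    using Suc(1)[of "parent v"] p Suc(2) by auto
  have "(parent v, v) \<in> tree_edges" using Suc(3) \<open>v \<noteq> \<rho>\<close> tree_edges_iff by blast
  then have "walk tree [parent v, v]" using p Suc(3) by (simp add: walk_def tree_def)
  then have "walk tree (xs @ [v])" using walk_append[OF xs(1)] xs(3) by fastforce
  then show ?case using xs p walk_nonempty[OF xs(1)] by (intro exI[of _ "xs @ [v]"]) auto
qed

lemma dist_tree:
  assumes "v \<in> S"
  shows "dist tree \<rho> v = depth v"
  unfolding dist_def
proof (rule Least_equality)
  show "\<exists>xs. walk tree xs \<and> hd xs = \<rho> \<and> last xs = v \<and> length xs = Suc (depth v)"
    using tree_walk_to[OF assms] .
  fix m assume "\<exists>xs. walk tree xs \<and> hd xs = \<rho> \<and> last xs = v \<and> length xs = Suc m"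
  then obtain xs where xs: "walk tree xs" "hd xs = \<rho>" "last xs = v" "length xs = Suc m" by blast
  have "set xs \<subseteq> fst H" using xs(1) by (auto simp: walk_def tree_def)
  then have "walk H xs" using walk_mono[OF xs(1)] tree_edges_subset by (simp add: tree_def)
  then show "depth v \<le> m" using dist_le_walk xs(2-4) unfolding depth_def by fastforce
qed

lemma tree_is_graph: "is_graph tree"
proof -
  have "finite S" using graph S_vertices finite_subset unfolding is_graph_def by blast
  moreover have "(x, x) \<notin> tree_edges" for x
    using tree_edge_to_parent[of x x] parent(3)[of x] by auto
  ultimately show ?thesis
    using sym_tree_edges tree_edges_subset unfolding is_graph_def tree_def by auto
qed

lemma tree_connected: "connected_graph tree"
proof -
  have "reachable tree \<rho> v" if "v \<in> S" for v
    using tree_walk_to[OF that] unfolding reachable_def by blast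
  moreover have "sym (snd tree)" using sym_tree_edges by (simp add: tree_def)
  ultimately show ?thesis
    unfolding connected_graph_iff_reachable tree_def fst_conv
    using reachable_sym reachable_trans by (metis tree_def)
qed

text \<open>On a cycle, a vertex of maximal depth would have both cycle neighbours as its parent.\<close>

lemma tree_acyclic: "\<not> has_cycle tree"
proof
  assume "has_cycle tree"
  then obtain xs where gp: "gpath tree xs" and len: "length xs \<ge> 3"
    and closing: "(last xs, hd xs) \<in> tree_edges"
    unfolding has_cycle_def tree_def by auto
  define n where "n = length xs"
  define cyc_next where "cyc_next j = (if Suc j < n then Suc j else 0)" for j
  have edge: "(xs ! j, xs ! cyc_next j) \<in> tree_edges" if "j < n" for j
  proof (cases "Suc j < n")
    case True
    then show ?thesis
      using gp unfolding gpath_def walk_def n_def cyc_next_def tree_def by (auto intro: successively_nth)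
  next
    case False
    moreover have "xs \<noteq> []" using len by auto
    ultimately have "j = n - 1" "xs \<noteq> []" using that by simp_all
    then have "xs ! j = last xs" "xs ! cyc_next j = hd xs"
      by (auto simp: cyc_next_def n_def last_conv_nth hd_conv_nth)
    then show ?thesis using closing by simp
  qed
  obtain i where i: "i < n" "\<forall>j<n. depth (xs ! j) \<le> depth (xs ! i)"
  proof -
    have "Max (depth ` set xs) \<in> depth ` set xs" using len by (intro Max_in) auto
    then obtain i where "i < n" "depth (xs ! i) = Max (depth ` set xs)"
      by (auto simp: in_set_conv_nth n_def)
    then show thesis using that by (simp add: n_def)
  qed
  define prev where "prev = (if i = 0 then n - 1 else i - 1)"
  have prev: "prev < n" "cyc_next prev = i" "cyc_next i < n"
    using i(1) len unfolding prev_def cyc_next_def n_def by auto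
  have "(xs ! i, xs ! prev) \<in> tree_edges"
    using edge[OF prev(1)] prev(2) sym_tree_edges by (auto dest: symD)
  then have "xs ! prev = parent (xs ! i)"
    using i(2) prev(1) by (blast intro: tree_edge_to_parent(3))
  moreover have "xs ! cyc_next i = parent (xs ! i)"
    using edge[OF i(1)] i(2) prev(3) by (blast intro: tree_edge_to_parent(3))
  ultimately have "xs ! prev = xs ! cyc_next i" by simp
  then have "prev = cyc_next i"
    using gp prev(1,3) unfolding gpath_def n_def by (simp add: nth_eq_iff_index_eq)
  then show False using i(1) len unfolding prev_def cyc_next_def n_def by (auto split: if_splits)
qed

lemma bfs_tree: "bfs_tree G (\<rho>, tree)"
  unfolding bfs_tree_def
proof (simp, intro conjI ballI)
  show "subgraph tree G"
    using S_vertices tree_edges_subset unfolding subgraph_def tree_def by auto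
  show "is_tree tree"
    using tree_is_graph tree_connected tree_acyclic root_in unfolding is_tree_def by (auto simp: tree_def)
  show "\<rho> \<in> fst tree" using root_in by (simp add: tree_def)
  show "dist tree \<rho> v = dist (induced G (fst tree)) \<rho> v" if "v \<in> fst tree" for v
    using dist_tree that by (simp add: tree_def depth_def)
qed

end

lemma bfs_tree_exists:
  assumes "is_graph G" "S \<subseteq> fst G" "connected_on G S" "\<rho> \<in> S"
  shows "\<exists>T. bfs_tree G (\<rho>, T) \<and> fst T = S"
proof -
  interpret bfs_construction G S \<rho> using assms by unfold_locales
  show ?thesis using bfs_tree by (intro exI[of _ tree]) (simp add: tree_def)
qed

subsection \<open>Minors given by branch sets\<close>

definition adjacent_sets :: "'a graph \<Rightarrow> 'a set \<Rightarrow> 'a set \<Rightarrow> bool" where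
  "adjacent_sets G A B \<longleftrightarrow> (\<exists>a\<in>A. \<exists>b\<in>B. (a, b) \<in> snd G)"

definition branch_sets :: "'a graph \<Rightarrow> 'a set set \<Rightarrow> bool" where
  "branch_sets G M \<longleftrightarrow> (\<forall>A\<in>M. A \<noteq> {} \<and> A \<subseteq> fst G \<and> connected_on G A) \<and>
     (\<forall>A\<in>M. \<forall>B\<in>M. A \<noteq> B \<longrightarrow> A \<inter> B = {})"

text \<open>A set E of edges between branch sets, each realised by an edge of G, describes a minor
of G with vertex set M; E need not contain all such pairs.\<close>

definition minor_edges :: "'a graph \<Rightarrow> 'a set set \<Rightarrow> ('a set \<times> 'a set) set \<Rightarrow> bool" where
  "minor_edges G M E \<longleftrightarrow>
     E \<subseteq> M \<times> M \<and> sym E \<and> (\<forall>A B. (A, B) \<in> E \<longrightarrow> A \<noteq> B \<and> adjacent_sets G A B)"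

definition nbrs :: "('b \<times> 'b) set \<Rightarrow> 'b \<Rightarrow> 'b set" where
  "nbrs E A = {B. (A, B) \<in> E}"

definition union_of :: "'a set set \<Rightarrow> 'a set \<Rightarrow> bool" where
  "union_of M X \<longleftrightarrow> X = \<Union>{B\<in>M. B \<subseteq> X}"

definition K_minor_over :: "nat \<Rightarrow> 'a graph \<Rightarrow> 'a set set \<Rightarrow> bool" where
  "K_minor_over r G M \<longleftrightarrow> (\<exists>B :: nat \<Rightarrow> 'a set.
     (\<forall>i<r. B i \<noteq> {} \<and> union_of M (B i) \<and> connected_on G (B i)) \<and>
     (\<forall>i<r. \<forall>j<r. i \<noteq> j \<longrightarrow> B i \<inter> B j = {}) \<and>
     (\<forall>i<r. \<forall>j<r. i \<noteq> j \<longrightarrow> adjacent_sets G (B i) (B j)))"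

lemma adjacent_sets_mono:
  "adjacent_sets G A B \<Longrightarrow> A \<subseteq> A' \<Longrightarrow> B \<subseteq> B' \<Longrightarrow> adjacent_sets G A' B'"
  unfolding adjacent_sets_def by blast

lemma adjacent_sets_sym: "sym (snd G) \<Longrightarrow> adjacent_sets G A B \<Longrightarrow> adjacent_sets G B A"
  unfolding adjacent_sets_def by (meson symD)

lemma union_of_member: "A \<in> M \<Longrightarrow> union_of M A"
  unfolding union_of_def by blast

lemma union_of_Un: "union_of M A \<Longrightarrow> union_of M B \<Longrightarrow> union_of M (A \<union> B)"
  unfolding union_of_def by blast

lemma union_of_trans:
  assumes "union_of N X" "N \<subseteq> M" "\<forall>A\<in>M. union_of M0 A"
  shows "union_of M0 X"
  unfolding union_of_def
proof
  show "X \<subseteq> \<Union>{B \<in> M0. B \<subseteq> X}"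
  proof
    fix a assume "a \<in> X"
    then obtain A where A: "A \<in> N" "A \<subseteq> X" "a \<in> A" using assms(1) unfolding union_of_def by blast
    then have "union_of M0 A" using assms(2,3) by blast
    then obtain B where "B \<in> M0" "B \<subseteq> A" "a \<in> B" using A(3) unfolding union_of_def by blast
    then show "a \<in> \<Union>{B \<in> M0. B \<subseteq> X}" using A(2) by blast
  qed
qed blast

lemma union_of_subset_Union: "union_of N X \<Longrightarrow> X \<subseteq> \<Union>N"
  unfolding union_of_def by blast

lemma union_of_nonempty: "union_of N X \<Longrightarrow> X \<noteq> {} \<Longrightarrow> \<exists>A\<in>N. A \<subseteq> X \<and> A \<noteq> {}"
  unfolding union_of_def by blast

lemma branch_sets_subset: "branch_sets G M \<Longrightarrow> N \<subseteq> M \<Longrightarrow> branch_sets G N"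
  unfolding branch_sets_def by blast

lemma finite_branch_sets:
  assumes "is_graph G" "branch_sets G M"
  shows "finite M"
proof -
  have "M \<subseteq> Pow (fst G)" "finite (fst G)"
    using assms unfolding branch_sets_def is_graph_def by auto
  then show ?thesis by (meson finite_Pow_iff finite_subset)
qed

lemma minor_edges_restrict:
  "minor_edges G M E \<Longrightarrow> N \<subseteq> M \<Longrightarrow> minor_edges G N (E \<inter> N \<times> N)"
  unfolding minor_edges_def sym_def by blast

lemma finite_nbrs: "finite M \<Longrightarrow> E \<subseteq> M \<times> M \<Longrightarrow> finite (nbrs E A)"
  unfolding nbrs_def by (rule finite_subset[of _ M]) auto

lemma card_edges_eq_sum_degrees:
  assumes "E \<subseteq> M \<times> M" "finite M"
  shows "card E = (\<Sum>A\<in>M. card (nbrs E A))"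
proof -
  have "E = Sigma M (nbrs E)" using assms(1) unfolding nbrs_def by auto
  then show ?thesis using card_SigmaI[OF assms(2), of "nbrs E"] finite_nbrs[OF assms(2,1)] by simp
qed

lemma card_edges_ge_min_degree:
  assumes "E \<subseteq> M \<times> M" "finite M" "\<And>A. A \<in> M \<Longrightarrow> k \<le> card (nbrs E A)"
  shows "k * card M \<le> card E"
proof -
  have "card M * k \<le> (\<Sum>A\<in>M. card (nbrs E A))"
    using assms(3) by (rule sum_bounded_below[where 'a=nat, simplified])
  then show ?thesis using card_edges_eq_sum_degrees[OF assms(1,2)] by (simp add: mult.commute)
qed

lemma K_minor_over_imp_has_K_minor:
  assumes "branch_sets G M" "K_minor_over r G M"
  shows "has_K_minor r G"
proof -
  obtain B where B: "\<forall>i<r. B i \<noteq> {} \<and> union_of M (B i) \<and> connected_on G (B i)"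
    "\<forall>i<r. \<forall>j<r. i \<noteq> j \<longrightarrow> B i \<inter> B j = {}"
    "\<forall>i<r. \<forall>j<r. i \<noteq> j \<longrightarrow> adjacent_sets G (B i) (B j)"
    using assms(2) unfolding K_minor_over_def by blast
  have "B i \<subseteq> fst G" if "i < r" for i
  proof -
    have "union_of M (B i)" using B(1) that by blast
    then have "B i \<subseteq> \<Union>M" by (rule union_of_subset_Union)
    moreover have "\<Union>M \<subseteq> fst G" using assms(1) unfolding branch_sets_def by blast
    ultimately show ?thesis by (rule order_trans)
  qed
  then have "\<forall>i<r. B i \<noteq> {} \<and> B i \<subseteq> fst G \<and> connected_graph (induced G (B i))"
    using B(1) unfolding connected_on_def by simp
  moreover have "\<forall>i<r. \<forall>j<r. i \<noteq> j \<longrightarrow> (\<exists>x\<in>B i. \<exists>y\<in>B j. (x, y) \<in> snd G)"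
    using B(3) unfolding adjacent_sets_def by simp
  ultimately show ?thesis
    unfolding has_K_minor_def using B(2) by (intro exI[of _ B] conjI)
qed

lemma K_minor_over_extend:
  assumes M: "branch_sets G M" and x: "x \<in> M" and N: "N \<subseteq> M - {x}"
    and adj: "\<And>A. A \<in> N \<Longrightarrow> adjacent_sets G x A \<and> adjacent_sets G A x"
    and K: "K_minor_over r G N"
  shows "K_minor_over (Suc r) G M"
proof -
  obtain B where B1: "\<forall>i<r. B i \<noteq> {} \<and> union_of N (B i) \<and> connected_on G (B i)"
    and B2: "\<forall>i<r. \<forall>j<r. i \<noteq> j \<longrightarrow> B i \<inter> B j = {}"
    and B3: "\<forall>i<r. \<forall>j<r. i \<noteq> j \<longrightarrow> adjacent_sets G (B i) (B j)"
    using K unfolding K_minor_over_def by blast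
  define B' where "B' = B(r := x)"
  have x_props: "x \<noteq> {}" "connected_on G x" "union_of M x"
    using M x union_of_member unfolding branch_sets_def by auto
  have B_over_N: "union_of N (B i)" "B i \<noteq> {}" if "i < r" for i
    using B1 that by auto
  have B_over_M: "union_of M (B i)" if "i < r" for i
    by (rule union_of_trans[OF B_over_N(1)[OF that]]) (use N union_of_member in auto)
  have B_disj: "B i \<inter> x = {}" if i: "i < r" for i
    unfolding disjoint_iff
  proof (intro allI impI)
    fix a assume "a \<in> B i"
    then obtain A where A: "A \<in> N" "a \<in> A"
      using union_of_subset_Union[OF B_over_N(1)[OF i]] by blast
    have "A \<in> M" "A \<noteq> x" using A(1) N by auto
    then have "A \<inter> x = {}" using M x unfolding branch_sets_def by blast
    then show "a \<notin> x" using A(2) by blast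
  qed
  have B_adj: "adjacent_sets G x (B i) \<and> adjacent_sets G (B i) x" if i: "i < r" for i
  proof -
    obtain A where A: "A \<in> N" "A \<subseteq> B i" using union_of_nonempty B_over_N[OF i] by blast
    then have "adjacent_sets G x A" "adjacent_sets G A x" using adj by auto
    then show ?thesis
      using adjacent_sets_mono[OF _ order_refl A(2)] adjacent_sets_mono[OF _ A(2) order_refl] by blast
  qed
  have "B' i \<noteq> {} \<and> union_of M (B' i) \<and> connected_on G (B' i)" if "i < Suc r" for i
    using that B1 B_over_M x_props unfolding B'_def by (cases "i = r") auto
  moreover have "B' i \<inter> B' j = {}" if "i < Suc r" "j < Suc r" "i \<noteq> j" for i j
    using that B2 B_disj unfolding B'_def by (cases "i = r"; cases "j = r") (auto simp: Int_commute)
  moreover have "adjacent_sets G (B' i) (B' j)" if "i < Suc r" "j < Suc r" "i \<noteq> j" for i j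
    using that B3 B_adj unfolding B'_def by (cases "i = r"; cases "j = r") auto
  ultimately show ?thesis unfolding K_minor_over_def by (intro exI[of _ B']) blast
qed

subsection \<open>Contracting an edge of a minor\<close>

locale contraction =
  fixes G :: "'a graph" and M :: "'a set set" and E :: "('a set \<times> 'a set) set" and x z :: "'a set"
  assumes graph: "is_graph G" and branch: "branch_sets G M" and edges: "minor_edges G M E"
    and xz: "(x, z) \<in> E"
begin

definition rest :: "'a set set" where "rest = M - {x, z}"

definition merged_nbrs :: "'a set set" where "merged_nbrs = (nbrs E x \<union> nbrs E z) \<inter> rest"

definition new_sets :: "'a set set" where "new_sets = insert (x \<union> z) rest"

definition new_edges :: "('a set \<times> 'a set) set" where
  "new_edges = (E \<inter> rest \<times> rest) \<union> (\<lambda>w. (x \<union> z, w)) ` merged_nbrs \<union> (\<lambda>w. (w, x \<union> z)) ` merged_nbrs"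

lemma finite_M: "finite M"
  using graph branch by (rule finite_branch_sets)

lemma E_subset: "E \<subseteq> M \<times> M" and sym_E: "sym E"
  and E_adjacent: "\<And>A B. (A, B) \<in> E \<Longrightarrow> A \<noteq> B \<and> adjacent_sets G A B"
  using edges unfolding minor_edges_def by auto

lemma x_in: "x \<in> M" and z_in: "z \<in> M" and x_neq_z: "x \<noteq> z"
  using xz E_subset E_adjacent by auto

lemma branch_disjoint: "A \<in> M \<Longrightarrow> B \<in> M \<Longrightarrow> A \<noteq> B \<Longrightarrow> A \<inter> B = {}"
  using branch unfolding branch_sets_def by blast

lemma merged_disjoint: "w \<in> rest \<Longrightarrow> w \<inter> (x \<union> z) = {}"
  using branch_disjoint[OF _ x_in] branch_disjoint[OF _ z_in] unfolding rest_def by blast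

lemma merged_notin_rest: "x \<union> z \<notin> rest"
proof
  assume "x \<union> z \<in> rest"
  then have "x = {}" using merged_disjoint by blast
  then show False using branch x_in unfolding branch_sets_def by blast
qed

lemma card_new_sets: "card new_sets < card M"
proof -
  have "card rest = card M - 2"
    using x_in z_in x_neq_z finite_M unfolding rest_def by (subst card_Diff_subset) auto
  moreover have "2 \<le> card M"
    using card_mono[OF finite_M, of "{x, z}"] x_in z_in x_neq_z by simp
  ultimately show ?thesis
    using finite_M merged_notin_rest unfolding new_sets_def rest_def by simp
qed

lemma branch_sets_new_sets: "branch_sets G new_sets"
proof -
  have sym_G: "sym (snd G)" using graph by (simp add: is_graph_def)
  have x_props: "x \<noteq> {}" "x \<subseteq> fst G" "connected_on G x"
    and z_props: "z \<noteq> {}" "z \<subseteq> fst G" "connected_on G z"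
    using branch x_in z_in unfolding branch_sets_def by auto
  obtain a where "a \<in> x" using x_props by blast
  then have "connected_on G (x \<union> \<Union>{z})"
    using sym_G x_props z_props E_adjacent[OF xz] unfolding adjacent_sets_def
    by (intro connected_on_Un_attached) auto
  then have merged: "x \<union> z \<noteq> {} \<and> x \<union> z \<subseteq> fst G \<and> connected_on G (x \<union> z)"
    using x_props z_props by simp
  have "A \<noteq> {} \<and> A \<subseteq> fst G \<and> connected_on G A" if A: "A \<in> new_sets" for A
  proof (cases "A = x \<union> z")
    case False
    then have "A \<in> M" using A unfolding new_sets_def rest_def by blast
    then show ?thesis using branch unfolding branch_sets_def by blast
  qed (use merged in blast)
  moreover have "A \<inter> B = {}" if A: "A \<in> new_sets" and B: "B \<in> new_sets" and "A \<noteq> B" for A B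
  proof -
    consider "A = x \<union> z" "B \<in> rest" | "B = x \<union> z" "A \<in> rest" | "A \<in> rest" "B \<in> rest"
      using A B \<open>A \<noteq> B\<close> unfolding new_sets_def by blast
    then show ?thesis
    proof cases
      case 1 then show ?thesis using merged_disjoint[of B] by (simp add: Int_commute)
    next
      case 2 then show ?thesis using merged_disjoint[of A] by simp
    next
      case 3 then show ?thesis using branch_disjoint \<open>A \<noteq> B\<close> unfolding rest_def by blast
    qed
  qed
  ultimately show ?thesis unfolding branch_sets_def by blast
qed

lemma minor_edges_new_edges: "minor_edges G new_sets new_edges"
proof -
  have sym_G: "sym (snd G)" using graph by (simp add: is_graph_def)
  have merged_adj: "adjacent_sets G (x \<union> z) w \<and> adjacent_sets G w (x \<union> z)"
    if "w \<in> merged_nbrs" for w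
  proof -
    have "adjacent_sets G x w \<or> adjacent_sets G z w"
      using that E_adjacent unfolding merged_nbrs_def nbrs_def by blast
    then have "adjacent_sets G (x \<union> z) w"
      using adjacent_sets_mono[OF _ _ order_refl] by blast
    then show ?thesis using adjacent_sets_sym[OF sym_G] by blast
  qed
  have "sym new_edges"
    using sym_E unfolding new_edges_def sym_def by blast
  moreover have "new_edges \<subseteq> new_sets \<times> new_sets"
    unfolding new_edges_def new_sets_def merged_nbrs_def by auto
  moreover have "A \<noteq> B \<and> adjacent_sets G A B" if AB: "(A, B) \<in> new_edges" for A B
  proof -
    consider "(A, B) \<in> E" | "A = x \<union> z" "B \<in> merged_nbrs" | "B = x \<union> z" "A \<in> merged_nbrs"
      using AB unfolding new_edges_def by blast
    then show ?thesis
    proof cases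
      case 1 then show ?thesis using E_adjacent by blast
    next
      case 2 then show ?thesis
        using merged_adj merged_notin_rest unfolding merged_nbrs_def by blast
    next
      case 3 then show ?thesis
        using merged_adj merged_notin_rest unfolding merged_nbrs_def by blast
    qed
  qed
  ultimately show ?thesis unfolding minor_edges_def by blast
qed

lemma union_of_new_sets:
  assumes "\<forall>A\<in>M. union_of M0 A"
  shows "\<forall>A\<in>new_sets. union_of M0 A"
proof -
  have "union_of M0 (x \<union> z)" using assms x_in z_in by (intro union_of_Un) auto
  then show ?thesis using assms unfolding new_sets_def rest_def by auto
qed

text \<open>Only the two edges joining x and z and, for each common neighbour of x and z, one of the
two pairs of edges joining it to x and z are lost.\<close>

lemma card_edges_contract: "card E \<le> card new_edges + 2 * card (nbrs E x \<inter> nbrs E z) + 4"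
proof -
  define inner where "inner = E \<inter> rest \<times> rest"
  define at_xz where "at_xz = {e\<in>E. fst e \<in> {x, z}}"
  have fin_E: "finite E" using E_subset finite_M by (meson finite_SigmaI finite_subset)
  have fin_U: "finite merged_nbrs" using finite_M unfolding merged_nbrs_def rest_def by simp
  have fin_nbrs: "finite (nbrs E y)" for y using finite_nbrs[OF finite_M E_subset] .
  have card_new: "card new_edges = card inner + card merged_nbrs + card merged_nbrs"
  proof -
    have "card ((\<lambda>w. (x \<union> z, w)) ` merged_nbrs) = card merged_nbrs"
      "card ((\<lambda>w. (w, x \<union> z)) ` merged_nbrs) = card merged_nbrs"
      by (auto intro!: card_image simp: inj_on_def)
    moreover have "finite inner" using fin_E unfolding inner_def by simp
    moreover have "inner \<inter> (\<lambda>w. (x \<union> z, w)) ` merged_nbrs = {}"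
      "(inner \<union> (\<lambda>w. (x \<union> z, w)) ` merged_nbrs) \<inter> (\<lambda>w. (w, x \<union> z)) ` merged_nbrs = {}"
      using merged_notin_rest unfolding inner_def merged_nbrs_def by auto
    ultimately show ?thesis
      using fin_U unfolding new_edges_def inner_def[symmetric] by (simp add: card_Un_disjoint)
  qed
  define to_xz where "to_xz = {e\<in>E. snd e \<in> {x, z}}"
  have "to_xz = prod.swap ` at_xz"
    using sym_E unfolding to_xz_def at_xz_def by (force dest: symD)
  then have card_to_xz: "card to_xz = card at_xz" by (simp add: card_image)
  have "E \<subseteq> inner \<union> at_xz \<union> to_xz"
    using E_subset unfolding inner_def at_xz_def to_xz_def rest_def by auto
  then have "card E \<le> card (inner \<union> at_xz \<union> to_xz)"
    using fin_E unfolding inner_def at_xz_def to_xz_def by (intro card_mono) auto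
  also have "\<dots> \<le> card inner + card at_xz + card to_xz"
    by (meson add_le_mono card_Un_le le_refl order_trans)
  also note card_to_xz
  also have "card at_xz \<le> card ({x} \<times> nbrs E x \<union> {z} \<times> nbrs E z)"
    using fin_nbrs unfolding at_xz_def nbrs_def by (intro card_mono) auto
  also have "\<dots> \<le> card (nbrs E x) + card (nbrs E z)"
    by (rule order_trans[OF card_Un_le]) (simp add: card_cartesian_product)
  finally have c1: "card E \<le> card inner + 2 * (card (nbrs E x) + card (nbrs E z))" by simp
  have "nbrs E x \<union> nbrs E z \<subseteq> merged_nbrs \<union> {x, z}"
    using E_subset unfolding merged_nbrs_def rest_def nbrs_def by auto
  then have "card (nbrs E x \<union> nbrs E z) \<le> card (merged_nbrs \<union> {x, z})"
    using fin_U by (intro card_mono) auto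
  also have "\<dots> \<le> card merged_nbrs + 2"
    using card_Un_le[of merged_nbrs "{x, z}"] x_neq_z by simp
  finally have c2: "card (nbrs E x \<union> nbrs E z) \<le> card merged_nbrs + 2" .
  have "card (nbrs E x) + card (nbrs E z) = card (nbrs E x \<union> nbrs E z) + card (nbrs E x \<inter> nbrs E z)"
    using fin_nbrs[of x] fin_nbrs[of z] by (rule card_Un_Int)
  then show ?thesis using c1 c2 card_new by arith
qed

lemma sparse_contraction_common_nbrs:
  assumes "D * card M \<le> card E" "card new_edges < D * card new_sets"
  shows "D < 2 * card (nbrs E x \<inter> nbrs E z) + 4"
proof -
  have "D * card new_sets + D \<le> D * card M"
    using mult_le_mono2[of "Suc (card new_sets)" "card M" D] card_new_sets by simp
  then show ?thesis using assms card_edges_contract by linarith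
qed

end

subsection \<open>Dense minors contain complete minors\<close>

lemma K_minor_over_coarsen:
  assumes "K_minor_over r G N" "\<forall>A\<in>N. union_of M A"
  shows "K_minor_over r G M"
proof -
  obtain B where B: "\<forall>i<r. B i \<noteq> {} \<and> union_of N (B i) \<and> connected_on G (B i)"
    "\<forall>i<r. \<forall>j<r. i \<noteq> j \<longrightarrow> B i \<inter> B j = {}"
    "\<forall>i<r. \<forall>j<r. i \<noteq> j \<longrightarrow> adjacent_sets G (B i) (B j)"
    using assms(1) unfolding K_minor_over_def by blast
  have "union_of M (B i)" if "i < r" for i
    using union_of_trans[of N "B i" N M] B(1) that assms(2) by blast
  then have "\<forall>i<r. B i \<noteq> {} \<and> union_of M (B i) \<and> connected_on G (B i)"
    using B(1) by blast
  then show ?thesis unfolding K_minor_over_def using B(2,3) by (intro exI[of _ B] conjI)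
qed

text \<open>Mader's argument: among the dense minors coarsening M take one with fewest branch sets.
Contracting one of its edges destroys density, so the ends of every edge have many common
neighbours; hence the neighbourhood of a branch set is dense again and contains a
\<open>K\<^sub>r\<close> minor by induction.\<close>

lemma dense_minor_K_minor_over:
  assumes G: "is_graph G"
  shows "branch_sets G M \<Longrightarrow> minor_edges G M E \<Longrightarrow> M \<noteq> {} \<Longrightarrow> 2 * 4 ^ r * card M \<le> card E
    \<Longrightarrow> K_minor_over r G M"
proof (induction r arbitrary: M E)
  case 0
  show ?case unfolding K_minor_over_def by (intro exI[of _ "\<lambda>i. {}"]) simp
next
  case (Suc r)
  define k :: nat where "k = 4 ^ r"
  have k: "1 \<le> k" unfolding k_def by simp
  define dense where "dense = (\<lambda>(M', E'). branch_sets G M' \<and> minor_edges G M' E' \<and> M' \<noteq> {} \<and>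
     8 * k * card M' \<le> card E' \<and> (\<forall>A\<in>M'. union_of M A))"
  have "dense (M, E)" unfolding dense_def k_def using Suc.prems union_of_member by auto
  then obtain ME1 where dense1: "dense ME1"
    and minimal: "\<And>ME'. dense ME' \<Longrightarrow> card (fst ME1) \<le> card (fst ME')"
    using ex_has_least_nat[of dense "(M, E)" "\<lambda>ME. card (fst ME)"] by blast
  obtain M1 E1 where ME1: "ME1 = (M1, E1)" by (cases ME1)
  have M1: "branch_sets G M1" and E1: "minor_edges G M1 E1" and "M1 \<noteq> {}"
    and density: "8 * k * card M1 \<le> card E1" and over_M: "\<forall>A\<in>M1. union_of M A"
    using dense1 unfolding dense_def ME1 by auto
  have fin_M1: "finite M1" using G M1 by (rule finite_branch_sets)
  have E1_sub: "E1 \<subseteq> M1 \<times> M1" and sym_E1: "sym E1"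
    and E1_adj: "\<And>A B. (A, B) \<in> E1 \<Longrightarrow> A \<noteq> B \<and> adjacent_sets G A B"
    using E1 unfolding minor_edges_def by auto
  have "0 < 8 * k * card M1"
    using \<open>M1 \<noteq> {}\<close> fin_M1 k by (simp add: card_gt_0_iff)
  then have "E1 \<noteq> {}" using density by auto
  then obtain x y where xy: "(x, y) \<in> E1" by auto
  define N where "N = nbrs E1 x"
  have x_in: "x \<in> M1" and N_sub: "N \<subseteq> M1 - {x}" and "N \<noteq> {}"
    using xy E1_sub E1_adj unfolding N_def nbrs_def by auto
  have common: "2 * k \<le> card (nbrs E1 z \<inter> N)" if z: "z \<in> N" for z
  proof -
    interpret contraction G M1 E1 x z
      using G M1 E1 z unfolding N_def nbrs_def by unfold_locales auto
    have "new_sets \<noteq> {}" unfolding new_sets_def by simp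
    then have "dense (new_sets, new_edges) \<longleftrightarrow> 8 * k * card new_sets \<le> card new_edges"
      using branch_sets_new_sets minor_edges_new_edges union_of_new_sets[OF over_M]
      unfolding dense_def by simp
    moreover have "\<not> dense (new_sets, new_edges)"
      using minimal[of "(new_sets, new_edges)"] card_new_sets unfolding ME1 by auto
    ultimately have "card new_edges < 8 * k * card new_sets" by simp
    then have "8 * k < 2 * card (nbrs E1 x \<inter> nbrs E1 z) + 4"
      using sparse_contraction_common_nbrs density by blast
    then show ?thesis using k unfolding N_def by (simp add: Int_commute)
  qed
  have "2 * k * card N \<le> card (E1 \<inter> N \<times> N)"
  proof (rule card_edges_ge_min_degree)
    show "finite N" using N_sub fin_M1 finite_subset by blast
    show "2 * k \<le> card (nbrs (E1 \<inter> N \<times> N) z)" if "z \<in> N" for z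
    proof -
      have "nbrs (E1 \<inter> N \<times> N) z = nbrs E1 z \<inter> N" using that unfolding nbrs_def by blast
      then show ?thesis using common[OF that] by simp
    qed
  qed blast
  then have "K_minor_over r G N"
    using Suc.IH[OF branch_sets_subset[OF M1] minor_edges_restrict[OF E1]] N_sub \<open>N \<noteq> {}\<close>
    unfolding k_def by blast
  moreover have "adjacent_sets G x A \<and> adjacent_sets G A x" if "A \<in> N" for A
    using that E1_adj sym_E1 unfolding N_def nbrs_def by (auto dest: symD)
  ultimately have "K_minor_over (Suc r) G M1"
    using K_minor_over_extend[OF M1 x_in N_sub] by blast
  then show ?case using over_M by (rule K_minor_over_coarsen)
qed

subsection \<open>Degeneracy\<close>

definition degenerate :: "nat \<Rightarrow> 'b set \<Rightarrow> ('b \<times> 'b) set \<Rightarrow> bool" where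
  "degenerate d M E \<longleftrightarrow> (\<forall>S\<subseteq>M. S \<noteq> {} \<longrightarrow> (\<exists>A\<in>S. card (nbrs E A \<inter> S) < d))"

lemma degenerate_subset: "degenerate d M E \<Longrightarrow> M' \<subseteq> M \<Longrightarrow> degenerate d M' E"
  unfolding degenerate_def by blast

lemma minor_free_degenerate:
  assumes G: "is_graph G" and free: "\<not> has_K_minor r G"
    and M: "branch_sets G M" and E: "minor_edges G M E"
  shows "degenerate (2 * 4 ^ r) M E"
  unfolding degenerate_def
proof (intro allI impI)
  fix S assume S: "S \<subseteq> M" "S \<noteq> {}"
  show "\<exists>A\<in>S. card (nbrs E A \<inter> S) < 2 * 4 ^ r"
  proof (rule ccontr)
    assume "\<not> ?thesis"
    moreover have "nbrs (E \<inter> S \<times> S) A = nbrs E A \<inter> S" if "A \<in> S" for A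
      using that unfolding nbrs_def by blast
    ultimately have "2 * 4 ^ r * card S \<le> card (E \<inter> S \<times> S)"
      using finite_branch_sets[OF G branch_sets_subset[OF M S(1)]]
      by (intro card_edges_ge_min_degree) auto
    then have "K_minor_over r G S"
      using dense_minor_K_minor_over[OF G] branch_sets_subset[OF M S(1)]
        minor_edges_restrict[OF E S(1)] S(2) by blast
    then show False
      using free K_minor_over_imp_has_K_minor branch_sets_subset[OF M S(1)] by blast
  qed
qed

lemma degenerate_restrict:
  assumes "degenerate d M E" "M' \<subseteq> M"
  shows "degenerate d M' (E \<inter> M' \<times> M')"
  unfolding degenerate_def
proof (intro allI impI)
  fix S assume S: "S \<subseteq> M'" "S \<noteq> {}"
  then obtain B where B: "B \<in> S" "card (nbrs E B \<inter> S) < d"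
    using assms unfolding degenerate_def by blast
  moreover have "nbrs (E \<inter> M' \<times> M') B \<inter> S = nbrs E B \<inter> S"
    using B(1) S(1) unfolding nbrs_def by blast
  ultimately show "\<exists>B\<in>S. card (nbrs (E \<inter> M' \<times> M') B \<inter> S) < d" by (intro bexI[of _ B]) simp_all
qed

lemma degenerate_remove_min_degree:
  assumes "finite M" "degenerate d M E" "M \<noteq> {}"
  obtains A where "A \<in> M" "card (nbrs E A \<inter> M) < d" "degenerate d (M - {A}) E"
    "card (M - {A}) < card M"
proof -
  obtain A where A: "A \<in> M" "card (nbrs E A \<inter> M) < d"
    using assms(2,3) unfolding degenerate_def by blast
  moreover have "degenerate d (M - {A}) E" using degenerate_subset[OF assms(2)] by blast
  moreover have "card (M - {A}) < card M" using card_Diff1_less[OF assms(1) A(1)] .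
  ultimately show thesis by (rule that)
qed

lemma degenerate_colouring:
  assumes "finite M" "degenerate d M E" "sym E"
  shows "\<exists>col. (\<forall>A\<in>M. col A < d) \<and> (\<forall>A\<in>M. \<forall>B\<in>M. (A, B) \<in> E \<and> A \<noteq> B \<longrightarrow> col A \<noteq> col B)"
  using assms(1,2)
proof (induction "card M" arbitrary: M rule: less_induct)
  case less
  show ?case
  proof (cases "M = {}")
    case False
    then obtain A where A: "A \<in> M" "card (nbrs E A \<inter> M) < d" "degenerate d (M - {A}) E"
      "card (M - {A}) < card M"
      using degenerate_remove_min_degree less.prems by blast
    then obtain col where col: "\<forall>B\<in>M - {A}. col B < d"
      "\<forall>B\<in>M - {A}. \<forall>C\<in>M - {A}. (B, C) \<in> E \<and> B \<noteq> C \<longrightarrow> col B \<noteq> col C"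
      using less.hyps[OF A(4) _ A(3)] less.prems(1) by blast
    define used where "used = col ` (nbrs E A \<inter> (M - {A}))"
    have "card used \<le> card (nbrs E A \<inter> (M - {A}))"
      unfolding used_def using less.prems(1) by (intro card_image_le) simp
    also have "\<dots> \<le> card (nbrs E A \<inter> M)"
      using less.prems(1) by (intro card_mono) auto
    finally have "card used < card {..<d}" using A(2) by simp
    moreover have "finite used" unfolding used_def using less.prems(1) by simp
    ultimately obtain c where c: "c < d" "c \<notin> used"
      by (metis card_mono leD lessThan_iff subsetI)
    have "\<forall>B\<in>M. (col(A := c)) B < d" using col c by auto
    moreover have "(col(A := c)) B \<noteq> (col(A := c)) C"
      if BC: "B \<in> M" "C \<in> M" "(B, C) \<in> E" "B \<noteq> C" for B C
    proof -
      consider "B = A" | "C = A" | "B \<in> M - {A}" "C \<in> M - {A}" using BC by blast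
      then show ?thesis
      proof cases
        case 1
        then have "C \<in> nbrs E A \<inter> (M - {A})" using BC unfolding nbrs_def by auto
        then show ?thesis using 1 BC(4) c unfolding used_def by auto
      next
        case 2
        then have "B \<in> nbrs E A \<inter> (M - {A})"
          using BC symD[OF assms(3) BC(3)] unfolding nbrs_def by auto
        then show ?thesis using 2 BC(4) c unfolding used_def by auto
      next
        case 3
        then show ?thesis using col(2) BC by auto
      qed
    qed
    ultimately show ?thesis by blast
  qed simp
qed

text \<open>Orient every edge away from a vertex of minimum degree, then recurse.\<close>

lemma degenerate_orientation:
  assumes "finite M" "degenerate d M E" "sym E" "E \<subseteq> M \<times> M" "0 < d"
  shows "\<exists>Or\<subseteq>E. (\<forall>A B. (A, B) \<in> E \<longrightarrow> (A, B) \<in> Or \<or> (B, A) \<in> Or) \<and> (\<forall>A. card (nbrs Or A) < d)"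
  using assms(1,2,4,3)
proof (induction "card M" arbitrary: M E rule: less_induct)
  case less
  show ?case
  proof (cases "M = {}")
    case True
    then have "E = {}" using less.prems(3) by blast
    then show ?thesis using assms(5) by (intro exI[of _ "{}"]) (simp add: nbrs_def)
  next
    case False
    then obtain A where A: "A \<in> M" "card (nbrs E A \<inter> M) < d" "degenerate d (M - {A}) E"
      "card (M - {A}) < card M"
      using degenerate_remove_min_degree less.prems by blast
    define E' where "E' = E \<inter> (M - {A}) \<times> (M - {A})"
    have degenerate': "degenerate d (M - {A}) E'"
      unfolding E'_def using degenerate_restrict[OF less.prems(2)] by blast
    have sym': "sym E'" using less.prems(4) unfolding E'_def sym_def by blast
    have sub': "E' \<subseteq> (M - {A}) \<times> (M - {A})" unfolding E'_def by blast
    have fin': "finite (M - {A})" using less.prems(1) by simp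
    obtain Or' where Or': "Or' \<subseteq> E'"
      "\<forall>B C. (B, C) \<in> E' \<longrightarrow> (B, C) \<in> Or' \<or> (C, B) \<in> Or'" "\<forall>B. card (nbrs Or' B) < d"
      using less.hyps[OF A(4) fin' degenerate' sub' sym'] by blast
    define Or where "Or = Or' \<union> {(A, B) | B. (A, B) \<in> E}"
    have "Or \<subseteq> E" using Or'(1) unfolding Or_def E'_def by blast
    moreover have "(B, C) \<in> Or \<or> (C, B) \<in> Or" if BC: "(B, C) \<in> E" for B C
    proof (cases "B = A \<or> C = A")
      case True
      then show ?thesis using BC symD[OF less.prems(4) BC] unfolding Or_def by blast
    next
      case False
      then have "(B, C) \<in> E'" using BC less.prems(3) unfolding E'_def by blast
      then show ?thesis using Or'(2) unfolding Or_def by blast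
    qed
    moreover have "card (nbrs Or B) < d" for B
    proof (cases "B = A")
      case True
      have "nbrs Or A = nbrs E A \<inter> M"
        using Or'(1) less.prems(3) unfolding Or_def E'_def nbrs_def by blast
      then show ?thesis using True A(2) by simp
    next
      case False
      then have "nbrs Or B = nbrs Or' B" unfolding Or_def nbrs_def by blast
      then show ?thesis using Or'(3) by simp
    qed
    ultimately show ?thesis by blast
  qed
qed

subsection \<open>The root expansion\<close>

definition tree_vertices :: "'a \<times> 'a graph \<Rightarrow> 'a set" where
  "tree_vertices T = fst (snd T)"

definition bfs_tree_on :: "'a graph \<Rightarrow> 'a \<Rightarrow> 'a set \<Rightarrow> 'a \<times> 'a graph" where
  "bfs_tree_on G \<rho> S = (\<rho>, SOME T. bfs_tree G (\<rho>, T) \<and> fst T = S)"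

lemma bfs_tree_on:
  assumes "is_graph G" "S \<subseteq> fst G" "connected_on G S" "\<rho> \<in> S"
  shows "bfs_tree G (bfs_tree_on G \<rho> S)" "tree_vertices (bfs_tree_on G \<rho> S) = S"
    "fst (bfs_tree_on G \<rho> S) = \<rho>"
  using someI_ex[OF bfs_tree_exists[OF assms]]
  unfolding bfs_tree_on_def tree_vertices_def by auto

lemma bfs_tree_vertices:
  assumes "bfs_tree G T"
  shows "connected_on G (tree_vertices T)" "tree_vertices T \<subseteq> fst G" "fst T \<in> tree_vertices T"
proof -
  obtain \<rho> T' where T: "T = (\<rho>, T')" by (cases T)
  have sub: "subgraph T' G" and tree: "is_tree T'" and root: "\<rho> \<in> fst T'"
    using assms unfolding T bfs_tree_def by auto
  have "snd T' \<subseteq> fst T' \<times> fst T'" using tree unfolding is_tree_def is_graph_def by simp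
  then have edges: "snd T' \<subseteq> snd (induced G (fst T'))" using sub unfolding subgraph_def by auto
  have "reachable (induced G (fst T')) u v" if "u \<in> fst T'" "v \<in> fst T'" for u v
    using tree that edges reachable_mono[of T' u v "induced G (fst T')"]
    unfolding is_tree_def connected_graph_iff_reachable by simp
  then show "connected_on G (tree_vertices T)"
    unfolding connected_on_iff tree_vertices_def T by simp
  show "tree_vertices T \<subseteq> fst G" "fst T \<in> tree_vertices T"
    using sub root unfolding subgraph_def tree_vertices_def T by auto
qed

lemma bfs_forest_image:
  assumes "\<And>i. i \<in> I \<Longrightarrow> bfs_tree G (f i)"
    and "\<And>i j. i \<in> I \<Longrightarrow> j \<in> I \<Longrightarrow> i \<noteq> j \<Longrightarrow> tree_vertices (f i) \<inter> tree_vertices (f j) = {}"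
  shows "bfs_forest G (f ` I)"
  unfolding bfs_forest_def
proof (intro conjI ballI impI)
  show "bfs_tree G T" if "T \<in> f ` I" for T using that assms(1) by blast
  fix T1 T2 assume "T1 \<in> f ` I" "T2 \<in> f ` I" "T1 \<noteq> T2"
  then obtain i j where "i \<in> I" "j \<in> I" "T1 = f i" "T2 = f j" "i \<noteq> j" by blast
  then show "fst (snd T1) \<inter> fst (snd T2) = {}" using assms(2) unfolding tree_vertices_def by blast
qed

locale minor_free_forest =
  fixes G :: "'a graph" and r :: nat and F :: "('a \<times> 'a graph) set"
  assumes graph: "is_graph G" and minor_free: "\<not> has_K_minor r G" and forest: "bfs_forest G F"
begin

abbreviation d :: nat where "d \<equiv> 2 * 4 ^ r"

lemma sym_G: "sym (snd G)"
  using graph by (simp add: is_graph_def)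

definition clusters :: "'a set set" where
  "clusters = tree_vertices ` F"

definition root_of :: "'a set \<Rightarrow> 'a" where
  "root_of P = fst (THE T. T \<in> F \<and> tree_vertices T = P)"

lemma tree_vertices_F:
  assumes "T \<in> F"
  shows "connected_on G (tree_vertices T)" "tree_vertices T \<subseteq> fst G" "fst T \<in> tree_vertices T"
  using bfs_tree_vertices forest assms unfolding bfs_forest_def by blast+

lemma tree_vertices_F_disjoint:
  "T1 \<in> F \<Longrightarrow> T2 \<in> F \<Longrightarrow> T1 \<noteq> T2 \<Longrightarrow> tree_vertices T1 \<inter> tree_vertices T2 = {}"
  using forest unfolding bfs_forest_def tree_vertices_def by blast

lemma root_of_tree_vertices:
  assumes "T \<in> F"
  shows "root_of (tree_vertices T) = fst T"
proof -
  have "T' = T" if "T' \<in> F" "tree_vertices T' = tree_vertices T" for T'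
    using that assms tree_vertices_F_disjoint tree_vertices_F(3) by blast
  then have "(THE T'. T' \<in> F \<and> tree_vertices T' = tree_vertices T) = T"
    using assms by (intro the_equality) auto
  then show ?thesis unfolding root_of_def by simp
qed

lemma clusters:
  assumes "P \<in> clusters"
  shows "connected_on G P" "P \<subseteq> fst G" "root_of P \<in> P"
proof -
  obtain T where T: "T \<in> F" "P = tree_vertices T" using assms unfolding clusters_def by blast
  show "connected_on G P" "P \<subseteq> fst G" "root_of P \<in> P"
    using tree_vertices_F[OF T(1)] root_of_tree_vertices[OF T(1)] T(2) by simp_all
qed

lemma clusters_disjoint: "P \<in> clusters \<Longrightarrow> Q \<in> clusters \<Longrightarrow> P \<noteq> Q \<Longrightarrow> P \<inter> Q = {}"
  unfolding clusters_def using tree_vertices_F_disjoint by blast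

lemma branch_sets_clusters: "branch_sets G clusters"
  unfolding branch_sets_def using clusters clusters_disjoint by blast

definition cluster_edges :: "('a set \<times> 'a set) set" where
  "cluster_edges = {(P, Q). P \<in> clusters \<and> Q \<in> clusters \<and> P \<noteq> Q \<and> adjacent_sets G P Q}"

lemma minor_edges_cluster_edges: "minor_edges G clusters cluster_edges"
  unfolding minor_edges_def
proof (intro conjI)
  show "cluster_edges \<subseteq> clusters \<times> clusters" unfolding cluster_edges_def by auto
  show "sym cluster_edges"
    unfolding sym_def cluster_edges_def using adjacent_sets_sym[OF sym_G] by auto
  show "\<forall>A B. (A, B) \<in> cluster_edges \<longrightarrow> A \<noteq> B \<and> adjacent_sets G A B"
    unfolding cluster_edges_def by auto
qed

definition colour :: "'a set \<Rightarrow> nat" where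
  "colour = (SOME col. (\<forall>P\<in>clusters. col P < d) \<and>
     (\<forall>P\<in>clusters. \<forall>Q\<in>clusters. (P, Q) \<in> cluster_edges \<and> P \<noteq> Q \<longrightarrow> col P \<noteq> col Q))"

lemma colour: "P \<in> clusters \<Longrightarrow> colour P < d"
  "P \<in> clusters \<Longrightarrow> Q \<in> clusters \<Longrightarrow> P \<noteq> Q \<Longrightarrow> adjacent_sets G P Q \<Longrightarrow> colour P \<noteq> colour Q"
proof -
  have "degenerate d clusters cluster_edges"
    using minor_free_degenerate[OF graph minor_free branch_sets_clusters minor_edges_cluster_edges] .
  moreover have "sym cluster_edges" using minor_edges_cluster_edges unfolding minor_edges_def by blast
  ultimately have "\<exists>col. (\<forall>P\<in>clusters. col P < d) \<and>
     (\<forall>P\<in>clusters. \<forall>Q\<in>clusters. (P, Q) \<in> cluster_edges \<and> P \<noteq> Q \<longrightarrow> col P \<noteq> col Q)"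
    by (rule degenerate_colouring[OF finite_branch_sets[OF graph branch_sets_clusters]])
  then have "\<forall>P\<in>clusters. colour P < d"
    "\<forall>P\<in>clusters. \<forall>Q\<in>clusters. (P, Q) \<in> cluster_edges \<and> P \<noteq> Q \<longrightarrow> colour P \<noteq> colour Q"
    using someI_ex[of "\<lambda>col. (\<forall>P\<in>clusters. col P < d) \<and>
     (\<forall>P\<in>clusters. \<forall>Q\<in>clusters. (P, Q) \<in> cluster_edges \<and> P \<noteq> Q \<longrightarrow> col P \<noteq> col Q)"]
    unfolding colour_def by blast+
  then show "P \<in> clusters \<Longrightarrow> colour P < d"
    "P \<in> clusters \<Longrightarrow> Q \<in> clusters \<Longrightarrow> P \<noteq> Q \<Longrightarrow> adjacent_sets G P Q \<Longrightarrow> colour P \<noteq> colour Q"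
    unfolding cluster_edges_def by simp_all
qed

definition colour_class :: "nat \<Rightarrow> 'a set set" where
  "colour_class c = {P \<in> clusters. colour P = c}"

definition outside :: "nat \<Rightarrow> 'a set" where
  "outside c = fst G - \<Union>(colour_class c)"

definition bip_sets :: "nat \<Rightarrow> 'a set set" where
  "bip_sets c = colour_class c \<union> (\<lambda>x. {x}) ` outside c"

definition bip_edges :: "nat \<Rightarrow> ('a set \<times> 'a set) set" where
  "bip_edges c = (let E = {(P, {x}) | P x. P \<in> colour_class c \<and> x \<in> outside c \<and> adjacent_sets G P {x}}
     in E \<union> E\<inverse>)"

lemma colour_class_clusters: "colour_class c \<subseteq> clusters"
  unfolding colour_class_def by blast

lemma outside_notin: "x \<in> outside c \<Longrightarrow> P \<in> colour_class c \<Longrightarrow> x \<notin> P"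
  unfolding outside_def by blast

lemma bip_edges_iff:
  "(A, B) \<in> bip_edges c \<longleftrightarrow>
     (\<exists>P x. P \<in> colour_class c \<and> x \<in> outside c \<and> adjacent_sets G P {x} \<and>
       ((A, B) = (P, {x}) \<or> (A, B) = ({x}, P)))"
  unfolding bip_edges_def Let_def by auto

lemma branch_sets_bip_sets: "branch_sets G (bip_sets c)"
proof -
  have "A \<noteq> {} \<and> A \<subseteq> fst G \<and> connected_on G A" if A: "A \<in> bip_sets c" for A
  proof (cases "A \<in> colour_class c")
    case True
    then show ?thesis using clusters colour_class_clusters by blast
  next
    case False
    then obtain x where "x \<in> outside c" "A = {x}" using A unfolding bip_sets_def by blast
    then show ?thesis using connected_on_singleton[of G x] unfolding outside_def by auto
  qed
  moreover have "A \<inter> B = {}" if A: "A \<in> bip_sets c" and B: "B \<in> bip_sets c" and "A \<noteq> B" for A B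
  proof (cases "A \<in> colour_class c")
    case True
    show ?thesis
    proof (cases "B \<in> colour_class c")
      case True
      then show ?thesis
        using \<open>A \<in> colour_class c\<close> \<open>A \<noteq> B\<close> clusters_disjoint colour_class_clusters by blast
    next
      case False
      then obtain y where "y \<in> outside c" "B = {y}" using B unfolding bip_sets_def by blast
      then show ?thesis using \<open>A \<in> colour_class c\<close> outside_notin by blast
    qed
  next
    case False
    then obtain x where x: "x \<in> outside c" "A = {x}" using A unfolding bip_sets_def by blast
    show ?thesis
    proof (cases "B \<in> colour_class c")
      case True
      then show ?thesis using x outside_notin by blast
    next
      case False
      then obtain y where "B = {y}" using B unfolding bip_sets_def by blast
      then show ?thesis using x \<open>A \<noteq> B\<close> by blast
    qed
  qed
  ultimately show ?thesis unfolding branch_sets_def by blast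
qed

lemma minor_edges_bip_edges: "minor_edges G (bip_sets c) (bip_edges c)"
  unfolding minor_edges_def
proof (intro conjI)
  show "bip_edges c \<subseteq> bip_sets c \<times> bip_sets c"
    unfolding bip_edges_def bip_sets_def Let_def by auto
  show "sym (bip_edges c)"
    unfolding bip_edges_def Let_def by (rule sym_Un_converse)
  show "\<forall>A B. (A, B) \<in> bip_edges c \<longrightarrow> A \<noteq> B \<and> adjacent_sets G A B"
  proof (intro allI impI)
    fix A B assume "(A, B) \<in> bip_edges c"
    then obtain P x where P: "P \<in> colour_class c" "x \<in> outside c" "adjacent_sets G P {x}"
      "(A, B) = (P, {x}) \<or> (A, B) = ({x}, P)"
      unfolding bip_edges_iff by blast
    moreover have "P \<noteq> {x}" using P(1,2) outside_notin by blast
    moreover have "adjacent_sets G {x} P" using P(3) adjacent_sets_sym[OF sym_G] by blast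
    ultimately show "A \<noteq> B \<and> adjacent_sets G A B" by auto
  qed
qed

definition orient :: "nat \<Rightarrow> ('a set \<times> 'a set) set" where
  "orient c = (SOME Or. Or \<subseteq> bip_edges c \<and>
     (\<forall>A B. (A, B) \<in> bip_edges c \<longrightarrow> (A, B) \<in> Or \<or> (B, A) \<in> Or) \<and> (\<forall>A. card (nbrs Or A) < d))"

lemma orient:
  "orient c \<subseteq> bip_edges c"
  "(A, B) \<in> bip_edges c \<Longrightarrow> (A, B) \<in> orient c \<or> (B, A) \<in> orient c"
  "card (nbrs (orient c) A) < d"
proof -
  have "sym (bip_edges c)" "bip_edges c \<subseteq> bip_sets c \<times> bip_sets c"
    using minor_edges_bip_edges unfolding minor_edges_def by blast+
  then have "\<exists>Or. Or \<subseteq> bip_edges c \<and>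
      (\<forall>A B. (A, B) \<in> bip_edges c \<longrightarrow> (A, B) \<in> Or \<or> (B, A) \<in> Or) \<and> (\<forall>A. card (nbrs Or A) < d)"
    using degenerate_orientation[OF finite_branch_sets[OF graph branch_sets_bip_sets]
        minor_free_degenerate[OF graph minor_free branch_sets_bip_sets minor_edges_bip_edges]]
    by simp
  from someI_ex[OF this, folded orient_def]
  show "orient c \<subseteq> bip_edges c"
    "(A, B) \<in> bip_edges c \<Longrightarrow> (A, B) \<in> orient c \<or> (B, A) \<in> orient c"
    "card (nbrs (orient c) A) < d"
    by blast+
qed

lemma finite_nbrs_orient: "finite (nbrs (orient c) A)"
proof -
  have "orient c \<subseteq> bip_sets c \<times> bip_sets c"
    using orient(1) minor_edges_bip_edges unfolding minor_edges_def by blast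
  then show ?thesis by (rule finite_nbrs[OF finite_branch_sets[OF graph branch_sets_bip_sets]])
qed

definition label :: "nat \<Rightarrow> 'a set \<Rightarrow> 'a set \<Rightarrow> nat" where
  "label c A = (SOME h. bij_betw h (nbrs (orient c) A) {0..<card (nbrs (orient c) A)})"

lemma label:
  "(A, B) \<in> orient c \<Longrightarrow> label c A B < d"
  "inj_on (label c A) (nbrs (orient c) A)"
proof -
  have "bij_betw (label c A) (nbrs (orient c) A) {0..<card (nbrs (orient c) A)}"
    using someI_ex[OF ex_bij_betw_finite_nat[OF finite_nbrs_orient]] unfolding label_def .
  then show "inj_on (label c A) (nbrs (orient c) A)" by (rule bij_betw_imp_inj_on)
  assume "(A, B) \<in> orient c"
  then have "label c A B < card (nbrs (orient c) A)"
    using \<open>bij_betw _ _ _\<close> bij_betwE unfolding nbrs_def by fastforce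
  then show "label c A B < d" using orient(3)[of c A] by linarith
qed


definition vertex_set :: "nat \<Rightarrow> nat \<Rightarrow> 'a \<Rightarrow> 'a set" where
  "vertex_set c t x = {x} \<union> \<Union>{P \<in> colour_class c. (P, {x}) \<in> orient c \<and> label c P {x} = t}"

definition cluster_set :: "nat \<Rightarrow> nat \<Rightarrow> 'a set \<Rightarrow> 'a set" where
  "cluster_set c t P = P \<union> {x \<in> outside c. ({x}, P) \<in> orient c \<and> label c {x} P = t}"

definition vertex_forest :: "nat \<Rightarrow> nat \<Rightarrow> ('a \<times> 'a graph) set" where
  "vertex_forest c t = (\<lambda>x. bfs_tree_on G x (vertex_set c t x)) ` outside c"

definition cluster_forest :: "nat \<Rightarrow> nat \<Rightarrow> ('a \<times> 'a graph) set" where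
  "cluster_forest c t = (\<lambda>P. bfs_tree_on G (root_of P) (cluster_set c t P)) ` colour_class c"

lemma orient_adjacent:
  assumes "(A, B) \<in> orient c"
  shows "adjacent_sets G A B"
  using assms orient(1) minor_edges_bip_edges unfolding minor_edges_def by blast

lemma vertex_set:
  assumes "x \<in> outside c"
  shows "vertex_set c t x \<subseteq> fst G" "connected_on G (vertex_set c t x)" "x \<in> vertex_set c t x"
proof -
  let ?K = "{P \<in> colour_class c. (P, {x}) \<in> orient c \<and> label c P {x} = t}"
  have "\<Union>?K \<subseteq> fst G"
  proof (rule Union_least)
    show "P \<subseteq> fst G" if "P \<in> ?K" for P using that clusters(2) colour_class_clusters by blast
  qed
  moreover have "x \<in> fst G" using assms unfolding outside_def by blast
  ultimately show "vertex_set c t x \<subseteq> fst G" unfolding vertex_set_def by blast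
  show "x \<in> vertex_set c t x" unfolding vertex_set_def by blast
  have "connected_on G P \<and> (\<exists>a\<in>{x}. \<exists>b\<in>P. (a, b) \<in> snd G)" if P: "P \<in> ?K" for P
  proof -
    have "connected_on G P" using P clusters(1) colour_class_clusters by blast
    moreover have "adjacent_sets G {x} P"
      using P orient_adjacent adjacent_sets_sym[OF sym_G] by blast
    ultimately show ?thesis unfolding adjacent_sets_def by blast
  qed
  then have "connected_on G ({x} \<union> \<Union>?K)"
    by (intro connected_on_Un_attached[OF sym_G connected_on_singleton]) auto
  then show "connected_on G (vertex_set c t x)" unfolding vertex_set_def .
qed

lemma cluster_set:
  assumes "P \<in> colour_class c"
  shows "cluster_set c t P \<subseteq> fst G" "connected_on G (cluster_set c t P)"
    "root_of P \<in> cluster_set c t P" "P \<subseteq> cluster_set c t P"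
proof -
  let ?X = "{x \<in> outside c. ({x}, P) \<in> orient c \<and> label c {x} P = t}"
  have P: "P \<in> clusters" using assms colour_class_clusters by blast
  show "cluster_set c t P \<subseteq> fst G"
    using clusters(2)[OF P] unfolding cluster_set_def outside_def by blast
  show "root_of P \<in> cluster_set c t P" using clusters(3)[OF P] unfolding cluster_set_def by blast
  show "P \<subseteq> cluster_set c t P" unfolding cluster_set_def by blast
  have "connected_on G Q \<and> (\<exists>a\<in>P. \<exists>b\<in>Q. (a, b) \<in> snd G)" if Q: "Q \<in> (\<lambda>x. {x}) ` ?X" for Q
  proof -
    obtain x where x: "x \<in> ?X" "Q = {x}" using Q by blast
    then have "adjacent_sets G P {x}"
      using orient_adjacent adjacent_sets_sym[OF sym_G] by blast
    then show ?thesis using x(2) connected_on_singleton unfolding adjacent_sets_def by simp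
  qed
  then have "connected_on G (P \<union> \<Union>((\<lambda>x. {x}) ` ?X))"
    by (rule connected_on_Un_attached[OF sym_G clusters(1)[OF P] clusters(3)[OF P]])
  moreover have "\<Union>((\<lambda>x. {x}) ` ?X) = ?X" by auto
  ultimately show "connected_on G (cluster_set c t P)" unfolding cluster_set_def by simp
qed

lemma vertex_set_cases:
  "a \<in> vertex_set c t x \<Longrightarrow>
    a = x \<or> (\<exists>P. P \<in> colour_class c \<and> (P, {x}) \<in> orient c \<and> label c P {x} = t \<and> a \<in> P)"
  unfolding vertex_set_def by auto

lemma vertex_sets_disjoint:
  assumes x: "x \<in> outside c" and y: "y \<in> outside c" and "x \<noteq> y"
  shows "vertex_set c t x \<inter> vertex_set c t y = {}"
  unfolding disjoint_iff
proof (intro allI impI)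
  fix a assume a: "a \<in> vertex_set c t x"
  show "a \<notin> vertex_set c t y"
  proof
    assume a': "a \<in> vertex_set c t y"
    have "a \<noteq> x"
    proof
      assume "a = x"
      then obtain Q where "Q \<in> colour_class c" "a \<in> Q"
        using a' \<open>x \<noteq> y\<close> vertex_set_cases by blast
      then show False using x \<open>a = x\<close> outside_notin by blast
    qed
    then obtain P where P: "P \<in> colour_class c" "(P, {x}) \<in> orient c" "label c P {x} = t" "a \<in> P"
      using a vertex_set_cases by blast
    then have "a \<noteq> y" using y outside_notin by blast
    then obtain Q where Q: "Q \<in> colour_class c" "(Q, {y}) \<in> orient c" "label c Q {y} = t" "a \<in> Q"
      using a' vertex_set_cases by blast
    have "P = Q" using P(1,4) Q(1,4) clusters_disjoint colour_class_clusters by blast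
    then have "label c P {x} = label c P {y}" "{x} \<in> nbrs (orient c) P" "{y} \<in> nbrs (orient c) P"
      using P(2,3) Q(2,3) unfolding nbrs_def by simp_all
    then have "{x} = {y}" using inj_onD[OF label(2)] by blast
    then show False using \<open>x \<noteq> y\<close> by simp
  qed
qed

lemma cluster_sets_disjoint:
  assumes P: "P \<in> colour_class c" and Q: "Q \<in> colour_class c" and "P \<noteq> Q"
  shows "cluster_set c t P \<inter> cluster_set c t Q = {}"
  unfolding disjoint_iff
proof (intro allI impI)
  have PQ: "P \<inter> Q = {}" using P Q \<open>P \<noteq> Q\<close> clusters_disjoint colour_class_clusters by blast
  fix a assume a: "a \<in> cluster_set c t P"
  show "a \<notin> cluster_set c t Q"
  proof
    assume a': "a \<in> cluster_set c t Q"
    have "a \<in> outside c" "({a}, P) \<in> orient c" "label c {a} P = t"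
      "({a}, Q) \<in> orient c" "label c {a} Q = t"
      using a a' P Q PQ outside_notin unfolding cluster_set_def by blast+
    then have "label c {a} P = label c {a} Q" "P \<in> nbrs (orient c) {a}" "Q \<in> nbrs (orient c) {a}"
      unfolding nbrs_def by simp_all
    then have "P = Q" using inj_onD[OF label(2)] by blast
    then show False using \<open>P \<noteq> Q\<close> by simp
  qed
qed

lemma vertex_forest: "bfs_forest G (vertex_forest c t)"
  unfolding vertex_forest_def
proof (rule bfs_forest_image)
  fix x y assume "x \<in> outside c"
  then show "bfs_tree G (bfs_tree_on G x (vertex_set c t x))"
    using bfs_tree_on(1)[OF graph vertex_set] by blast
  assume "y \<in> outside c" "x \<noteq> y"
  then show "tree_vertices (bfs_tree_on G x (vertex_set c t x)) \<inter>
      tree_vertices (bfs_tree_on G y (vertex_set c t y)) = {}"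
    using bfs_tree_on(2)[OF graph vertex_set] vertex_sets_disjoint \<open>x \<in> outside c\<close> by simp
qed

lemma cluster_forest: "bfs_forest G (cluster_forest c t)"
  unfolding cluster_forest_def
proof (rule bfs_forest_image)
  fix P Q assume "P \<in> colour_class c"
  then show "bfs_tree G (bfs_tree_on G (root_of P) (cluster_set c t P))"
    using bfs_tree_on(1)[OF graph cluster_set(1-3)] by blast
  assume "Q \<in> colour_class c" "P \<noteq> Q"
  then show "tree_vertices (bfs_tree_on G (root_of P) (cluster_set c t P)) \<inter>
      tree_vertices (bfs_tree_on G (root_of Q) (cluster_set c t Q)) = {}"
    using bfs_tree_on(2)[OF graph cluster_set(1-3)] cluster_sets_disjoint \<open>P \<in> colour_class c\<close>
    by simp
qed

definition expansion :: "('a \<times> 'a graph) set set" where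
  "expansion = insert F ((\<lambda>(c, t). vertex_forest c t) ` ({..<d} \<times> {..<d})
     \<union> (\<lambda>(c, t). cluster_forest c t) ` ({..<d} \<times> {..<d}))"

lemma expansion_forests: "F' \<in> expansion \<Longrightarrow> bfs_forest G F'"
  unfolding expansion_def using forest vertex_forest cluster_forest by auto

lemma card_expansion: "finite expansion" "card expansion \<le> 1 + 2 * d * d"
proof -
  let ?V = "(\<lambda>(c, t). vertex_forest c t) ` ({..<d} \<times> {..<d})"
  let ?C = "(\<lambda>(c, t). cluster_forest c t) ` ({..<d} \<times> {..<d})"
  show "finite expansion" unfolding expansion_def by simp
  have "card ?V \<le> d * d" "card ?C \<le> d * d"
    using card_image_le[of "{..<d} \<times> {..<d}"] by (simp_all add: card_cartesian_product)
  moreover have "card expansion \<le> Suc (card (?V \<union> ?C))"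
    unfolding expansion_def by (simp add: card_insert_if)
  moreover have "card (?V \<union> ?C) \<le> card ?V + card ?C" by (rule card_Un_le)
  ultimately show "card expansion \<le> 1 + 2 * d * d" by linarith
qed

lemma outside_colour_of_neighbour:
  assumes P: "P \<in> clusters" and "u \<in> P" "(u, x) \<in> snd G" "x \<in> fst G" "x \<notin> P"
  shows "x \<in> outside (colour P)"
proof -
  have "x \<notin> Q" if Q: "Q \<in> colour_class (colour P)" for Q
  proof
    assume "x \<in> Q"
    then have "P \<noteq> Q" using \<open>x \<notin> P\<close> by blast
    moreover have "adjacent_sets G P Q" unfolding adjacent_sets_def using assms \<open>x \<in> Q\<close> by blast
    moreover have "Q \<in> clusters" "colour Q = colour P" using Q unfolding colour_class_def by auto
    ultimately show False using colour(2)[of P Q] P by simp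
  qed
  then show ?thesis unfolding outside_def using \<open>x \<in> fst G\<close> by blast
qed

lemma colour_class_less: "P \<in> colour_class c \<Longrightarrow> c < d"
  using colour(1) unfolding colour_class_def by auto

lemma vertex_forest_preserves:
  assumes x: "x \<in> outside c" and P: "P \<in> colour_class c" and edge: "(P, {x}) \<in> orient c"
    and p: "set p \<subseteq> insert x P" "x \<in> set p"
  shows "\<exists>T'\<in>\<Union>expansion. preserves T' p"
proof -
  define t where "t = label c P {x}"
  define T' where "T' = bfs_tree_on G x (vertex_set c t x)"
  have "t < d" unfolding t_def using edge by (rule label(1))
  then have "T' \<in> \<Union>expansion"
    unfolding expansion_def vertex_forest_def T'_def using colour_class_less[OF P] x by blast
  moreover have "P \<subseteq> vertex_set c t x" unfolding vertex_set_def using P edge t_def by blast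
  then have "preserves T' p"
    using bfs_tree_on(2,3)[OF graph vertex_set[OF x]] vertex_set(3)[OF x] p
    unfolding preserves_def T'_def tree_vertices_def by auto
  ultimately show ?thesis by blast
qed

lemma cluster_forest_preserves:
  assumes x: "x \<in> outside c" and P: "P \<in> colour_class c" and edge: "({x}, P) \<in> orient c"
    and p: "set p \<subseteq> insert x P" "root_of P \<in> set p"
  shows "\<exists>T'\<in>\<Union>expansion. preserves T' p"
proof -
  define t where "t = label c {x} P"
  define T' where "T' = bfs_tree_on G (root_of P) (cluster_set c t P)"
  have "t < d" unfolding t_def using edge by (rule label(1))
  then have "T' \<in> \<Union>expansion"
    unfolding expansion_def cluster_forest_def T'_def using colour_class_less[OF P] P by blast
  moreover have "x \<in> cluster_set c t P" unfolding cluster_set_def using x edge t_def by blast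
  then have "set p \<subseteq> cluster_set c t P" using p(1) cluster_set(4)[OF P, of t] by blast
  then have "preserves T' p"
    using bfs_tree_on(2,3)[OF graph cluster_set(1-3)[OF P, of t]] p(2)
    unfolding preserves_def T'_def tree_vertices_def by auto
  ultimately show ?thesis by blast
qed

lemma extended_path_preserved:
  assumes T: "T \<in> F" and p: "gpath G p" and prefix: "preserves T (butlast p)"
  shows "\<exists>T'\<in>\<Union>expansion. preserves T' p"
proof -
  define P where "P = tree_vertices T"
  define x where "x = last p"
  have prefix_P: "set (butlast p) \<subseteq> P" and root: "fst T \<in> set (butlast p)"
    using prefix unfolding preserves_def P_def tree_vertices_def by auto
  have walk: "walk G p" using p unfolding gpath_def by simp
  have p_eq: "p = butlast p @ [x]" unfolding x_def using walk_nonempty[OF walk] by simp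
  have set_p: "set p = insert x (set (butlast p))"
    using arg_cong[where f = set, OF p_eq] by simp
  have P: "P \<in> clusters" unfolding clusters_def P_def using T by blast
  show ?thesis
  proof (cases "x \<in> P")
    case True
    then have "preserves T p"
      using set_p prefix_P root unfolding preserves_def P_def tree_vertices_def by auto
    then show ?thesis using T unfolding expansion_def by blast
  next
    case False
    define c where "c = colour P"
    have "butlast p \<noteq> []" using root by auto
    then have "last (butlast p) \<in> P" "(last (butlast p), x) \<in> snd G"
      using prefix_P walk_snoc_edge(2)[of G "butlast p" x] walk p_eq by auto
    moreover have "x \<in> fst G" using walk set_p unfolding walk_def by blast
    ultimately have x: "x \<in> outside c"
      using outside_colour_of_neighbour[OF P] False unfolding c_def by blast
    have P_c: "P \<in> colour_class c" using P unfolding c_def colour_class_def by simp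
    moreover have "adjacent_sets G P {x}"
      unfolding adjacent_sets_def using \<open>last (butlast p) \<in> P\<close> \<open>(last (butlast p), x) \<in> snd G\<close> by blast
    ultimately have "(P, {x}) \<in> bip_edges c" unfolding bip_edges_iff using x by blast
    moreover have p_sub: "set p \<subseteq> insert x P" using set_p prefix_P by blast
    moreover have "root_of P \<in> set p" using root_of_tree_vertices[OF T] root set_p unfolding P_def by simp
    ultimately consider "(P, {x}) \<in> orient c" | "({x}, P) \<in> orient c" using orient(2) by blast
    then show ?thesis
      using vertex_forest_preserves[OF x P_c _ p_sub] cluster_forest_preserves[OF x P_c _ p_sub]
        set_p \<open>root_of P \<in> set p\<close> by cases blast+
  qed
qed

lemma root_expansion_forest_expansion: "root_expansion_forest G F expansion"
  unfolding root_expansion_forest_def root_expansion_tree_def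
proof (intro conjI ballI allI impI)
  show "bfs_forest G F'" if "F' \<in> expansion" for F' using that by (rule expansion_forests)
  show "bfs_tree G T'" if "T' \<in> \<Union>expansion" for T'
    using that expansion_forests unfolding bfs_forest_def by blast
  show "\<exists>T'\<in>\<Union>expansion. preserves T' p" if "T \<in> F" "gpath G p \<and> preserves T (butlast p)" for T p
    using that extended_path_preserved by blast
qed

end

theorem lemma2p2:
  fixes r :: nat
  shows "\<exists>c :: nat. \<forall>(G :: 'a graph) F.
           is_graph G \<and> \<not> has_K_minor r G \<and> bfs_forest G F \<longrightarrow>
           (\<exists>FS. root_expansion_forest G F FS \<and> finite FS \<and> card FS \<le> c)"
proof (intro exI[of _ "1 + 2 * (2 * 4 ^ r) * (2 * 4 ^ r)"] allI impI)
  fix G :: "'a graph" and F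
  assume "is_graph G \<and> \<not> has_K_minor r G \<and> bfs_forest G F"
  then interpret minor_free_forest G r F by unfold_locales auto
  show "\<exists>FS. root_expansion_forest G F FS \<and> finite FS \<and> card FS \<le> 1 + 2 * (2 * 4 ^ r) * (2 * 4 ^ r)"
    using root_expansion_forest_expansion card_expansion by blast
qed

end
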